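(* Let $P(t)(z)=z^n+a_2(t)z^{n-2}-\dots+(-1)^na_n(t)$ (with $a_1=0$) be a curve of complex polynomials whose coefficients $a_i$ are either $C^\infty$ complex valued functions of a real parameter $t$ near $0$, or real analytic in real $t$ near $0$, or holomorphic in a complex parameter $t$ near $0$. Then for every integer $r\ge0$ the following are equivalent: (1) $m(a_k)\ge kr$ for all $2\le k\le n$; (2) $m(\tilde\Delta_k)\ge k(k-1)r$ for all $2\le k\le n$.
   Context: Convention: a monic polynomial is written $P(z)=z^n-a_1z^{n-1}+a_2z^{n-2}-\dots+(-1)^na_n$, so $a_i=\sigma_i(z_1,\dots,z_n)$ is the $i$-th elementary symmetric function of its roots. Multiplicity: for a continuous complex valued function $f$ defined near $0$, $m(f)\in\{0,1,2,\dots\}\cup\{\infty\}$ is the supremum of all integers $p\ge0$ such that $f(t)=t^pg(t)$ near $0$ for some continuous function $g$; for a function $F$ on the space of polynomials and a fixed curve $P$, $m(F)$ means $m(t\mapsto F(P(t)))$. Power sums $s_i(z)=\sum_{j=1}^nz_j^i$ ($s_0=n$); $B_k(z)$ is the $k\times k$ matrix with $(i,j)$-entry $s_{i+j-2}(z)$, and $\Delta_k(z)=\det B_k(z)=\sum_{i_1<\dots<i_k}\prod_{1\le l<m\le k}(z_{i_l}-z_{i_m})^2$. Since $\Delta_k$ is symmetric there is a unique polynomial $\tilde\Delta_k$ with $\Delta_k(z)=\tilde\Delta_k(\sigma_1(z),\dots,\sigma_n(z))$; for a polynomial $P$ with coefficients $a_1,\dots,a_n$ one writes $\tilde\Delta_k(P)=\tilde\Delta_k(a_1,\dots,a_n)$.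 *)

theory Defs
  imports "HOL-Complex_Analysis.Complex_Analysis"
begin

definition esym :: "nat \<Rightarrow> nat \<Rightarrow> (nat \<Rightarrow> complex) \<Rightarrow> complex" where
  "esym n i z = (\<Sum>S \<in> {S. S \<subseteq> {..<n} \<and> card S = i}. \<Prod>j\<in>S. z j)"

definition Delta :: "nat \<Rightarrow> nat \<Rightarrow> (nat \<Rightarrow> complex) \<Rightarrow> complex" where
  "Delta n k z = (\<Sum>I \<in> {I. I \<subseteq> {..<n} \<and> card I = k}.
      \<Prod>p \<in> {(l, m). l \<in> I \<and> m \<in> I \<and> l < m}. (z (fst p) - z (snd p))^2)"

text \<open>tilde Delta_k evaluated at coefficients a_1..a_n: Delta_k of any root vector z
  with sigma_i(z) = a_i (well defined since Delta_k is symmetric; such z exists by FTA).\<close>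
definition tDelta :: "nat \<Rightarrow> nat \<Rightarrow> (nat \<Rightarrow> complex) \<Rightarrow> complex" where
  "tDelta n k a = Delta n k (SOME z. \<forall>i\<in>{1..n}. esym n i z = a i)"

definition mult_ge_real :: "(real \<Rightarrow> complex) \<Rightarrow> nat \<Rightarrow> bool" where
  "mult_ge_real f p \<longleftrightarrow> (\<exists>e>0. \<exists>g. continuous_on (ball 0 e) g \<and>
      (\<forall>t\<in>ball 0 e. f t = complex_of_real t ^ p * g t))"

definition mult_ge_cplx :: "(complex \<Rightarrow> complex) \<Rightarrow> nat \<Rightarrow> bool" where
  "mult_ge_cplx f p \<longleftrightarrow> (\<exists>e>0. \<exists>g. continuous_on (ball 0 e) g \<and>
      (\<forall>t\<in>ball 0 e. f t = t ^ p * g t))"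

definition smooth_on :: "real set \<Rightarrow> (real \<Rightarrow> complex) \<Rightarrow> bool" where
  "smooth_on S f \<longleftrightarrow> (\<exists>D :: nat \<Rightarrow> real \<Rightarrow> complex. D 0 = f \<and>
      (\<forall>k. \<forall>t\<in>S. (D k has_vector_derivative D (Suc k) t) (at t)))"

definition real_analytic_on :: "real set \<Rightarrow> (real \<Rightarrow> complex) \<Rightarrow> bool" where
  "real_analytic_on S f \<longleftrightarrow> (\<forall>x\<in>S. \<exists>r>0. \<exists>c :: nat \<Rightarrow> complex.
      \<forall>t\<in>ball x r. (\<lambda>j. c j * complex_of_real (t - x) ^ j) sums f t)"

end

(* Homogeneity drives both directions: tDelta_k (c a_1, c^2 a_2, ..., c^n a_n) = c^(k(k-1)) tDelta_k (a).
   Hence if every a_k(t) = t^(kr) b_k(t), then tDelta_k (a(t)) = t^(k(k-1)r) tDelta_k (b(t)), and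
   tDelta_k is continuous in the coefficients (a compactness argument on the roots).
   Conversely, cap the multiplicity of a_k at kr, call it m_k, and let q minimise m_k / k, p = m_q.
   If p < qr, substitute t = s^q: then a_k(s^q) = s^(kp) c_k(s) with c continuous, and c_q(0) <> 0
   because a Taylor expansion of a_q would otherwise give it multiplicity p + 1.  By homogeneity and
   p < qr every tDelta_l (c(0)) vanishes, which together with c_1 = 0 forces all roots of the
   polynomial with coefficients c(0) to coincide and sum to 0, i.e. c(0) = 0, a contradiction.
   Smooth, real analytic and holomorphic curves all have the Taylor expansions needed. *)

theory Submission
  imports Defs "HOL-Combinatorics.Permutations" "HOL-Computational_Algebra.Fundamental_Theorem_Algebra"
begin

lemma LIMSEQ_if_subseqs_LIMSEQ:
  fixes X :: "nat \<Rightarrow> 'a::metric_space"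
  assumes "\<And>r :: nat \<Rightarrow> nat. strict_mono r \<Longrightarrow>
    \<exists>s :: nat \<Rightarrow> nat. strict_mono s \<and> (\<lambda>m. X (r (s m))) \<longlonglongrightarrow> L"
  shows "X \<longlonglongrightarrow> L"
proof (rule ccontr)
  assume "\<not> X \<longlonglongrightarrow> L"
  then obtain e where "e > 0" and "\<forall>N. \<exists>m\<ge>N. e \<le> dist (X m) L"
    unfolding lim_sequentially by (auto simp: not_less)
  then have "infinite {m. e \<le> dist (X m) L}"
    by (simp add: infinite_nat_iff_unbounded_le)
  then obtain r :: "nat \<Rightarrow> nat" where r: "strict_mono r" "\<forall>m. e \<le> dist (X (r m)) L"
    using infinite_enumerate[of "{m. e \<le> dist (X m) L}"] by auto
  obtain s where "strict_mono s" "(\<lambda>m. X (r (s m))) \<longlonglongrightarrow> L"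
    using assms[OF r(1)] by blast
  then obtain N where "\<forall>m\<ge>N. dist (X (r (s m))) L < e"
    using \<open>e > 0\<close> unfolding lim_sequentially by blast
  then show False using r(2) by (meson le_refl not_le)
qed

lemma bounded_vectors_convergent_subseq:
  fixes Z :: "nat \<Rightarrow> nat \<Rightarrow> complex"
  assumes "\<And>m j. j < n \<Longrightarrow> norm (Z m j) \<le> B"
  obtains s w where "strict_mono s" "\<forall>j<n. (\<lambda>m. Z (s m) j) \<longlonglongrightarrow> w j"
  using assms
proof (induction n arbitrary: thesis)
  case 0
  show ?case by (rule "0.prems"(1)[of id]) (auto simp: strict_mono_def)
next
  case (Suc n)
  obtain r w where r: "strict_mono r" "\<forall>j<n. (\<lambda>m. Z (r m) j) \<longlonglongrightarrow> w j"
    using Suc.IH Suc.prems(2) by (metis less_SucI)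
  have "bounded (range (\<lambda>m. Z (r m) n))"
    using Suc.prems(2) by (auto simp: bounded_iff)
  then obtain l s where s: "strict_mono s" "((\<lambda>m. Z (r m) n) \<circ> s) \<longlonglongrightarrow> l"
    using bounded_imp_convergent_subsequence by blast
  have "(\<lambda>m. Z ((r \<circ> s) m) j) \<longlonglongrightarrow> (w(n := l)) j" if "j < Suc n" for j
  proof (cases "j = n")
    case False
    then have "((\<lambda>m. Z (r m) j) \<circ> s) \<longlonglongrightarrow> w j"
      using r(2) s(1) that by (intro LIMSEQ_subseq_LIMSEQ) auto
    then show ?thesis using False by (simp add: o_def)
  qed (use s(2) in \<open>simp add: o_def\<close>)
  moreover have "strict_mono (r \<circ> s)" using r(1) s(1) by (rule strict_mono_o)
  ultimately show ?case
    using Suc.prems(1) by blast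
qed

lemma continuous_on_ball_eq_at_center:
  fixes F G :: "'a::{metric_space, perfect_space} \<Rightarrow> 'b::t2_space"
  assumes "0 < d" "continuous_on (ball x d) F" "continuous_on (ball x d) G"
    and "\<And>s. s \<in> ball x d \<Longrightarrow> s \<noteq> x \<Longrightarrow> F s = G s"
  shows "F x = G x"
proof (rule tendsto_unique[OF at_neq_bot])
  have "isCont F x" "isCont G x"
    using assms(1-3) centre_in_ball continuous_on_eq_continuous_at[OF open_ball] by blast+
  moreover have "eventually (\<lambda>s. G s = F s) (at x)"
    unfolding eventually_at using assms(1,4) by (auto simp: dist_commute)
  ultimately show "(F \<longlongrightarrow> F x) (at x)" "(F \<longlongrightarrow> G x) (at x)"
    by (auto simp: isCont_def intro: Lim_transform_eventually)
qed

lemma power_in_ball: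
  fixes s :: "'a::real_normed_div_algebra"
  assumes "s \<in> ball 0 e" "e \<le> 1" "0 < q"
  shows "s ^ q \<in> ball 0 e"
proof -
  have "norm s ^ q \<le> norm s ^ 1"
    using assms by (intro power_decreasing) auto
  then show ?thesis
    using assms(1) by (simp add: norm_power)
qed

lemma power_sum_coeffs_eq_0:
  fixes w :: "'b \<Rightarrow> 'c::real_normed_field"
  assumes "F \<noteq> bot" "(w \<longlongrightarrow> 0) F" "eventually (\<lambda>x. w x \<noteq> 0) F"
    and "((\<lambda>x. (\<Sum>j\<le>m. c j * w x ^ j) / w x ^ m) \<longlongrightarrow> 0) F"
    and "j \<le> m"
  shows "c j = 0"
  using assms(4,5)
proof (induction m arbitrary: c j)
  case 0
  then show ?case by (simp add: tendsto_const_iff[OF assms(1)])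
next
  case (Suc m)
  let ?S = "\<lambda>x. \<Sum>j\<le>Suc m. c j * w x ^ j"
  have "(?S \<longlongrightarrow> (\<Sum>j\<le>Suc m. c j * 0 ^ j)) F"
    using assms(2) by (intro tendsto_intros)
  then have "(?S \<longlongrightarrow> c 0) F"
    by (simp add: sum.atMost_Suc_shift)
  moreover have "(?S \<longlongrightarrow> 0 ^ Suc m * 0) F"
  proof (rule Lim_transform_eventually)
    show "((\<lambda>x. w x ^ Suc m * (?S x / w x ^ Suc m)) \<longlongrightarrow> 0 ^ Suc m * 0) F"
      using assms(2) Suc.prems(1) by (intro tendsto_intros)
    show "eventually (\<lambda>x. w x ^ Suc m * (?S x / w x ^ Suc m) = ?S x) F"
      using assms(3) by eventually_elim simp
  qed
  ultimately have c0: "c 0 = 0"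
    using tendsto_unique[OF assms(1)] by fastforce
  have "?S x = w x * (\<Sum>j\<le>m. c (Suc j) * w x ^ j)" for x
    unfolding sum.atMost_Suc_shift by (simp add: c0 sum_distrib_left algebra_simps)
  then have "((\<lambda>x. (\<Sum>j\<le>m. c (Suc j) * w x ^ j) / w x ^ m) \<longlongrightarrow> 0) F"
    using Lim_transform_eventually[OF Suc.prems(1)] assms(3)
    by (smt (verit) eventually_mono nonzero_mult_divide_mult_cancel_left power_Suc)
  then have "c (Suc i) = 0" if "i \<le> m" for i
    using Suc.IH[of "\<lambda>j. c (Suc j)" i] that by simp
  then show ?case
    using c0 Suc.prems(2) by (cases j) auto
qed

lemma ex_min_ratio:
  fixes u v :: "'a \<Rightarrow> nat"
  assumes "finite K" "K \<noteq> {}" "\<forall>k\<in>K. 0 < v k"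
  obtains k0 where "k0 \<in> K" "\<forall>k\<in>K. u k0 * v k \<le> u k * v k0"
proof -
  let ?ratio = "\<lambda>k. real (u k) / real (v k)"
  let ?k0 = "arg_min_on ?ratio K"
  have "?k0 \<in> K" "\<forall>k\<in>K. ?ratio ?k0 \<le> ?ratio k"
    using arg_min_if_finite[OF assms(1,2), of ?ratio] by (auto simp: not_less)
  then have "u ?k0 * v k \<le> u k * v ?k0" if "k \<in> K" for k
    using that assms(3) by (auto simp: divide_simps simp flip: of_nat_mult)
  with \<open>?k0 \<in> K\<close> show thesis using that by blast
qed

lemma Maclaurin_remainder_tendsto:
  fixes u :: "real \<Rightarrow> real" and diff :: "nat \<Rightarrow> real \<Rightarrow> real"
  assumes "0 < e" "diff 0 = u"
    and diff: "\<And>m t. \<bar>t\<bar> < e \<Longrightarrow> (diff m has_real_derivative diff (Suc m) t) (at t)"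
  shows "((\<lambda>t. (u t - (\<Sum>m<N. diff m 0 / fact m * t ^ m)) / t ^ N) \<longlongrightarrow> diff N 0 / fact N) (at 0)"
proof -
  have "\<exists>x. \<bar>x\<bar> \<le> \<bar>t\<bar> \<and> u t = (\<Sum>m<N. diff m 0 / fact m * t ^ m) + diff N x / fact N * t ^ N"
    if "\<bar>t\<bar> < e" for t
    using that diff by (intro Maclaurin_bi_le[where diff = diff and n = N and x = t, OF assms(2)]) auto
  then obtain \<xi> where \<xi>: "\<And>t. \<bar>t\<bar> < e \<Longrightarrow> \<bar>\<xi> t\<bar> \<le> \<bar>t\<bar> \<and>
      u t = (\<Sum>m<N. diff m 0 / fact m * t ^ m) + diff N (\<xi> t) / fact N * t ^ N"
    by metis
  have near_0: "eventually (\<lambda>t. \<bar>t\<bar> < e \<and> t \<noteq> 0) (at (0::real))"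
    unfolding eventually_at using assms(1) by (intro exI[of _ e]) auto
  have "(\<xi> \<longlongrightarrow> 0) (at 0)"
  proof (rule Lim_null_comparison)
    show "eventually (\<lambda>t. norm (\<xi> t) \<le> \<bar>t\<bar>) (at 0)"
      using near_0 by eventually_elim (use \<xi> in auto)
  qed (auto intro!: tendsto_eq_intros)
  moreover have "isCont (diff N) 0"
    using diff[of 0 N] assms(1) by (intro DERIV_isCont) auto
  ultimately have "((\<lambda>t. diff N (\<xi> t) / fact N) \<longlongrightarrow> diff N 0 / fact N) (at 0)"
    by (intro tendsto_divide tendsto_const isCont_tendsto_compose[of _ "diff N"]) auto
  moreover have "eventually (\<lambda>t. diff N (\<xi> t) / fact N = (u t - (\<Sum>m<N. diff m 0 / fact m * t ^ m)) / t ^ N) (at 0)"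
    using near_0 by eventually_elim (use \<xi> in simp)
  ultimately show ?thesis
    by (rule Lim_transform_eventually)
qed

lemma smooth_remainder_tendsto:
  fixes D :: "nat \<Rightarrow> real \<Rightarrow> complex"
  assumes "0 < e" and D: "\<forall>k. \<forall>t\<in>ball 0 e. (D k has_vector_derivative D (Suc k) t) (at t)"
  shows "((\<lambda>t. (D 0 t - (\<Sum>j<N. D j 0 / fact j * complex_of_real t ^ j)) / complex_of_real t ^ N)
      \<longlongrightarrow> D N 0 / fact N) (at 0)"
proof -
  have Re: "((\<lambda>t. (Re (D 0 t) - (\<Sum>j<N. Re (D j 0) / fact j * t ^ j)) / t ^ N) \<longlongrightarrow> Re (D N 0) / fact N) (at 0)"
    using D by (intro Maclaurin_remainder_tendsto[OF assms(1)] has_field_derivative_Re) auto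
  have Im: "((\<lambda>t. (Im (D 0 t) - (\<Sum>j<N. Im (D j 0) / fact j * t ^ j)) / t ^ N) \<longlongrightarrow> Im (D N 0) / fact N) (at 0)"
    using D by (intro Maclaurin_remainder_tendsto[OF assms(1)] has_field_derivative_Im) auto
  have scale: "z / fact j * complex_of_real t ^ j = complex_of_real (t ^ j / fact j) * z" for z j t
    by (simp add: field_simps)
  have real_mult: "Re (complex_of_real x * z) = x * Re z" "Im (complex_of_real x * z) = x * Im z" for x z
    by simp_all
  have real_div: "Re (z / complex_of_real t ^ N) = Re z / t ^ N" "Im (z / complex_of_real t ^ N) = Im z / t ^ N" for z t
    by (simp_all add: Re_divide_of_real Im_divide_of_real del: of_real_power add: of_real_power[symmetric])
  have "Re (z / fact j * complex_of_real t ^ j) = Re z / fact j * t ^ j"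
    "Im (z / fact j * complex_of_real t ^ j) = Im z / fact j * t ^ j" for z j t
    unfolding scale real_mult by simp_all
  then have quotient: "Re ((D 0 t - (\<Sum>j<N. D j 0 / fact j * complex_of_real t ^ j)) / complex_of_real t ^ N)
      = (Re (D 0 t) - (\<Sum>j<N. Re (D j 0) / fact j * t ^ j)) / t ^ N"
    "Im ((D 0 t - (\<Sum>j<N. D j 0 / fact j * complex_of_real t ^ j)) / complex_of_real t ^ N)
      = (Im (D 0 t) - (\<Sum>j<N. Im (D j 0) / fact j * t ^ j)) / t ^ N" for t
    by (simp_all only: real_div Re_sum Im_sum minus_complex.sel)
  have fact_div: "Re (z / fact j) = Re z / fact j" "Im (z / fact j) = Im z / fact j" for z j
    by (metis Re_divide_of_real Im_divide_of_real of_real_fact)+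
  show ?thesis
    unfolding tendsto_complex_iff quotient fact_div using Re Im by blast
qed

section \<open>Elementary symmetric functions and the polynomial with given roots\<close>

lemma esym_0 [simp]: "esym n 0 z = 1"
proof -
  have "{S. S \<subseteq> {..<n} \<and> card S = 0} = {{}}"
    by (auto simp: card_eq_0_iff dest: finite_subset[OF _ finite_lessThan])
  then show ?thesis unfolding esym_def by simp
qed

lemma esym_1: "esym n 1 z = (\<Sum>j<n. z j)"
proof -
  have "{S. S \<subseteq> {..<n} \<and> card S = 1} = (\<lambda>j. {j}) ` {..<n}"
    by (auto simp: card_Suc_eq)
  then show ?thesis
    unfolding esym_def by (simp add: sum.reindex inj_on_def)
qed

lemma esym_mult: "esym n i (\<lambda>j. c * z j) = c ^ i * esym n i z"
  unfolding esym_def by (simp add: prod.distrib sum_distrib_left)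

definition root_poly :: "nat \<Rightarrow> (nat \<Rightarrow> complex) \<Rightarrow> complex poly" where
  "root_poly n z = (\<Prod>j<n. [:- z j, 1:])"

lemma degree_root_poly: "degree (root_poly n z) = n"
  unfolding root_poly_def by (subst degree_prod_eq_sum_degree) auto

lemma proots_root_poly: "proots (root_poly n z) = mset (map z [0..<n])"
proof -
  have "proots (root_poly n z) = (\<Sum>j<n. {#z j#})"
    unfolding root_poly_def by (subst proots_prod) auto
  also have "\<dots> = mset (map z [0..<n])"
    by (induction n) auto
  finally show ?thesis .
qed

lemma coeff_root_poly:
  assumes "m \<le> n"
  shows "coeff (root_poly n z) m = (-1) ^ (n - m) * esym n (n - m) z"
proof -
  have "root_poly n z = (\<Prod>j<n. [:- z j:] + [:0, 1:])"
    unfolding root_poly_def by (intro prod.cong) auto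
  also have "\<dots> = (\<Sum>X\<in>Pow {..<n}. monom (\<Prod>j\<in>X. - z j) (n - card X))"
  proof (subst prod_add, simp, intro sum.cong refl)
    fix X assume X: "X \<in> Pow {..<n}"
    then have "finite X" by (auto intro: finite_subset)
    then have "(\<Prod>j\<in>X. [:- z j:]) = [:\<Prod>j\<in>X. - z j:]"
      by (induction X rule: finite_induct) auto
    moreover have "card ({..<n} - X) = n - card X"
      using X by (subst card_Diff_subset) (auto intro: finite_subset)
    ultimately show "(\<Prod>j\<in>X. [:- z j:]) * (\<Prod>j\<in>{..<n} - X. [:0, 1:]) = monom (\<Prod>j\<in>X. - z j) (n - card X)"
      by (simp add: monom_altdef)
  qed
  finally have "coeff (root_poly n z) m = (\<Sum>X\<in>Pow {..<n}. if n - card X = m then \<Prod>j\<in>X. - z j else 0)"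
    by (simp add: coeff_sum coeff_monom)
  also have "\<dots> = (\<Sum>X\<in>Pow {..<n}. if card X = n - m then \<Prod>j\<in>X. - z j else 0)"
  proof (intro sum.cong refl)
    fix X assume "X \<in> Pow {..<n}"
    then have "card X \<le> n" using card_mono[of "{..<n}" X] by auto
    then show "(if n - card X = m then \<Prod>j\<in>X. - z j else 0) = (if card X = n - m then \<Prod>j\<in>X. - z j else 0)"
      using assms by auto
  qed
  also have "\<dots> = (\<Sum>X\<in>{S. S \<subseteq> {..<n} \<and> card S = n - m}. (-1) ^ (n - m) * (\<Prod>j\<in>X. z j))"
    by (subst sum.inter_filter[symmetric]) (auto intro!: sum.cong simp: prod_uminus)
  finally show ?thesis
    unfolding esym_def by (simp add: sum_distrib_left)
qed

lemma root_poly_eqI: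
  assumes "\<forall>i\<in>{1..n}. esym n i z = esym n i w"
  shows "root_poly n z = root_poly n w"
proof (rule poly_eqI)
  fix m
  show "coeff (root_poly n z) m = coeff (root_poly n w) m"
  proof (cases "m \<le> n")
    case True
    then have "esym n (n - m) z = esym n (n - m) w"
      using assms by (cases "n - m = 0") auto
    then show ?thesis using True by (simp add: coeff_root_poly)
  qed (simp add: coeff_eq_0 degree_root_poly)
qed

lemma esym_surj: "\<exists>z. \<forall>i\<in>{1..n}. esym n i z = a i"
proof -
  define cf where "cf i = (if i = 0 then 1 else (-1) ^ i * a i)" for i
  define p where "p = (\<Sum>i\<le>n. monom (cf i) (n - i))"
  have coeff_p: "coeff p (n - i) = cf i" if "i \<le> n" for i
  proof -
    have "coeff p (n - i) = (\<Sum>k\<le>n. if k = i then cf k else 0)"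
      unfolding p_def coeff_sum coeff_monom using that by (intro sum.cong) auto
    then show ?thesis using that by simp
  qed
  have "degree p \<le> n"
    unfolding p_def by (intro degree_sum_le) (auto intro: order.trans[OF degree_monom_le])
  moreover have "coeff p n = 1" using coeff_p[of 0] by (simp add: cf_def)
  ultimately have deg: "degree p = n"
    by (intro antisym le_degree) auto
  obtain z where "smult (lead_coeff p) (\<Prod>i<degree p. [:- z i, 1:]) = p"
    using complex_poly_decompose' by blast
  with deg \<open>coeff p n = 1\<close> have "root_poly n z = p" by (simp add: root_poly_def)
  then have "(-1) ^ i * esym n i z = (-1) ^ i * a i" if "i \<in> {1..n}" for i
    using that coeff_root_poly[of "n - i" n z] coeff_p[of i] by (auto simp: cf_def)
  then show ?thesis by force
qed

section \<open>The functions Delta and tDelta\<close>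

definition off_diag :: "'a set \<Rightarrow> ('a \<times> 'a) set" where
  "off_diag I = {(l, m). l \<in> I \<and> m \<in> I \<and> l \<noteq> m}"

lemma finite_off_diag: "finite I \<Longrightarrow> finite (off_diag I)"
  unfolding off_diag_def by (rule finite_subset[of _ "I \<times> I"]) auto

lemma card_off_diag:
  assumes "finite I"
  shows "card (off_diag I) = card I * (card I - 1)"
proof -
  have "off_diag I = I \<times> I - (\<lambda>x. (x, x)) ` I"
    unfolding off_diag_def by auto
  moreover have "card ((\<lambda>x. (x, x)) ` I) = card I"
    by (rule card_image) (auto simp: inj_on_def)
  ultimately show ?thesis
    using assms by (simp add: card_Diff_subset card_cartesian_product image_subset_iff algebra_simps)
qed

lemma prod_off_diag_reindex:
  assumes "inj_on h I"
  shows "(\<Prod>q\<in>off_diag I. g (h (fst q)) (h (snd q))) = (\<Prod>q\<in>off_diag (h ` I). g (fst q) (snd q))"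
proof -
  have "off_diag (h ` I) = map_prod h h ` off_diag I"
    using assms unfolding off_diag_def by (auto simp: inj_on_def image_iff)
  moreover have "inj_on (map_prod h h) (off_diag I)"
    using assms by (auto simp: inj_on_def off_diag_def)
  ultimately show ?thesis
    by (simp add: prod.reindex case_prod_beta)
qed

text \<open>Each unordered pair \<open>{l, m}\<close> contributes \<open>(z l - z m) * (z m - z l) = - (z l - z m)^2\<close>
  to the product over ordered pairs.\<close>
lemma Delta_off_diag:
  "Delta n k z = (-1) ^ (k * (k - 1) div 2) *
     (\<Sum>I\<in>{I. I \<subseteq> {..<n} \<and> card I = k}. \<Prod>q\<in>off_diag I. z (fst q) - z (snd q))"
proof -
  have "(\<Prod>q\<in>off_diag I. z (fst q) - z (snd q)) =
      (-1) ^ (k * (k - 1) div 2) * (\<Prod>q\<in>{(l, m). l \<in> I \<and> m \<in> I \<and> l < m}. (z (fst q) - z (snd q))^2)"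
    if I: "I \<subseteq> {..<n}" "card I = k" for I
  proof -
    let ?P = "{(l, m). l \<in> I \<and> m \<in> I \<and> l < m}"
    have fin: "finite ?P" "finite I"
      using I by (auto intro: finite_subset[of _ "I \<times> I"] finite_subset[of _ "{..<n}"])
    have split: "off_diag I = ?P \<union> prod.swap ` ?P" "?P \<inter> prod.swap ` ?P = {}"
      unfolding off_diag_def by (auto simp: image_iff)
    have "card (off_diag I) = 2 * card ?P"
      unfolding split(1) using fin split(2) by (subst card_Un_disjoint) (auto simp: card_image)
    then have card_P: "card ?P = k * (k - 1) div 2"
      using card_off_diag[OF fin(2)] I by simp
    have "(\<Prod>q\<in>off_diag I. z (fst q) - z (snd q)) =
        (\<Prod>q\<in>?P. z (fst q) - z (snd q)) * (\<Prod>q\<in>?P. - (z (fst q) - z (snd q)))"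
      unfolding split(1) using fin split(2)
      by (subst prod.union_disjoint) (auto simp: prod.reindex)
    also have "\<dots> = (-1) ^ card ?P * (\<Prod>q\<in>?P. (z (fst q) - z (snd q))^2)"
      by (simp only: prod_uminus power2_eq_square prod.distrib ac_simps)
    finally show ?thesis unfolding card_P .
  qed
  then show ?thesis
    unfolding Delta_def by (simp add: sum_distrib_left)
qed

lemma Delta_cong: "(\<And>j. j < n \<Longrightarrow> z j = w j) \<Longrightarrow> Delta n k z = Delta n k w"
  unfolding Delta_def by (intro sum.cong refl prod.cong) auto

lemma Delta_permute:
  assumes p: "p permutes {..<n}"
  shows "Delta n k (\<lambda>j. z (p j)) = Delta n k z"
proof -
  let ?S = "{I. I \<subseteq> {..<n} \<and> card I = k}"
  have inj: "inj p" using p by (rule permutes_inj)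
  have "image p ` ?S = ?S"
  proof
    show "image p ` ?S \<subseteq> ?S"
      using permutes_in_image[OF p] inj by (auto simp: card_image inj_on_subset)
    show "?S \<subseteq> image p ` ?S"
    proof
      fix J assume J: "J \<in> ?S"
      have "inv p permutes {..<n}" using p by (rule permutes_inv)
      then have "inv p ` J \<in> ?S"
        using J permutes_in_image permutes_inj by (fastforce simp: card_image inj_on_subset)
      moreover have "J = p ` (inv p ` J)"
        by (simp add: image_comp permutes_inverses(1)[OF p] o_def)
      ultimately show "J \<in> image p ` ?S" by blast
    qed
  qed
  moreover have "inj_on (image p) ?S"
    by (simp add: inj_on_def inj_image_eq_iff[OF inj])
  ultimately have "(\<Sum>I\<in>?S. \<Prod>q\<in>off_diag (p ` I). z (fst q) - z (snd q)) =
      (\<Sum>I\<in>?S. \<Prod>q\<in>off_diag I. z (fst q) - z (snd q))"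
    using sum.reindex[of "image p" ?S "\<lambda>I. \<Prod>q\<in>off_diag I. z (fst q) - z (snd q)"] by simp
  then show ?thesis
    unfolding Delta_off_diag
    using prod_off_diag_reindex[OF inj_on_subset[OF inj], of _ "\<lambda>x y. z x - z y"] by simp
qed

lemma Delta_eq_if_esym_eq:
  assumes "\<forall>i\<in>{1..n}. esym n i z = esym n i w"
  shows "Delta n k z = Delta n k w"
proof -
  have "mset (map z [0..<n]) = mset (map w [0..<n])"
    using root_poly_eqI[OF assms] by (metis proots_root_poly)
  then obtain p where p: "p permutes {..<n}" "permute_list p (map w [0..<n]) = map z [0..<n]"
    by (metis mset_eq_permutation length_map length_upt minus_nat.diff_0)
  have "z j = w (p j)" if "j < n" for j
  proof -
    have "z j = permute_list p (map w [0..<n]) ! j" using p(2) that by simp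
    also have "\<dots> = w (p j)"
      using that p(1) permutes_in_image[OF p(1)] permute_list_nth[of p "map w [0..<n]"] by simp
    finally show ?thesis .
  qed
  then have "Delta n k z = Delta n k (\<lambda>j. w (p j))" by (rule Delta_cong)
  also have "\<dots> = Delta n k w" using p(1) by (rule Delta_permute)
  finally show ?thesis .
qed

lemma tDelta_eq_Delta:
  assumes "\<forall>i\<in>{1..n}. esym n i z = a i"
  shows "tDelta n k a = Delta n k z"
proof -
  have "\<forall>i\<in>{1..n}. esym n i (SOME z. \<forall>i\<in>{1..n}. esym n i z = a i) = a i"
    using esym_surj by (rule someI_ex)
  then show ?thesis
    unfolding tDelta_def using assms by (intro Delta_eq_if_esym_eq) auto
qed

lemma tDelta_cong: "(\<And>i. i \<in> {1..n} \<Longrightarrow> a i = b i) \<Longrightarrow> tDelta n k a = tDelta n k b"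
  by (metis esym_surj tDelta_eq_Delta)

lemma Delta_mult: "Delta n k (\<lambda>j. c * z j) = c ^ (k * (k - 1)) * Delta n k z"
proof -
  have "(\<Prod>q\<in>off_diag I. c * z (fst q) - c * z (snd q)) =
      c ^ (k * (k - 1)) * (\<Prod>q\<in>off_diag I. z (fst q) - z (snd q))"
    if "I \<subseteq> {..<n}" "card I = k" for I
  proof -
    have "finite I" using that by (auto intro: finite_subset)
    then have "card (off_diag I) = k * (k - 1)" using card_off_diag that by metis
    then show ?thesis
      by (simp add: prod.distrib flip: right_diff_distrib)
  qed
  then show ?thesis
    unfolding Delta_off_diag by (simp add: sum_distrib_left algebra_simps)
qed

lemma tDelta_mult: "tDelta n k (\<lambda>i. c ^ i * a i) = c ^ (k * (k - 1)) * tDelta n k a"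
proof -
  obtain z where z: "\<forall>i\<in>{1..n}. esym n i z = a i" using esym_surj by blast
  then have "tDelta n k (\<lambda>i. c ^ i * a i) = Delta n k (\<lambda>j. c * z j)"
    by (intro tDelta_eq_Delta) (simp add: esym_mult)
  then show ?thesis by (simp add: Delta_mult tDelta_eq_Delta[OF z])
qed

lemma Delta_card_image_neq_0: "Delta n (card (z ` {..<n})) z \<noteq> 0"
proof -
  let ?V = "z ` {..<n}"
  let ?S = "{I. I \<subseteq> {..<n} \<and> card I = card ?V}"
  define C where "C = (\<Prod>q\<in>off_diag ?V. fst q - snd q)"
  have "C \<noteq> 0"
    unfolding C_def using finite_off_diag[of ?V] by (auto simp: off_diag_def)
  have factor: "(\<Prod>q\<in>off_diag I. z (fst q) - z (snd q)) = (if inj_on z I then C else 0)"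
    if I: "I \<in> ?S" for I
  proof (cases "inj_on z I")
    case True
    then have "card (z ` I) = card ?V" using I by (simp add: card_image)
    then have "z ` I = ?V" using I by (intro card_subset_eq) auto
    then show ?thesis
      using True prod_off_diag_reindex[OF True, of "\<lambda>x y. x - y"] by (simp add: C_def)
  next
    case False
    then obtain l m where "(l, m) \<in> off_diag I" "z l = z m"
      by (auto simp: inj_on_def off_diag_def)
    moreover have "finite I" using I by (auto intro: finite_subset)
    ultimately have "(\<Prod>q\<in>off_diag I. z (fst q) - z (snd q)) = 0"
      by (intro prod_zero finite_off_diag) force+
    then show ?thesis
      using False by simp
  qed
  obtain U where "U \<subseteq> {..<n}" "inj_on z U" "?V = z ` U"
    using subset_image_inj[of ?V z "{..<n}"] by blast
  then have "U \<in> {I \<in> ?S. inj_on z I}" by (simp add: card_image)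
  moreover have "finite {I \<in> ?S. inj_on z I}"
    by (rule finite_subset[of _ "Pow {..<n}"]) auto
  ultimately have "card {I \<in> ?S. inj_on z I} \<noteq> 0" by auto
  moreover have "(\<Sum>I\<in>?S. \<Prod>q\<in>off_diag I. z (fst q) - z (snd q)) = of_nat (card {I \<in> ?S. inj_on z I}) * C"
    using finite_subset[of ?S "Pow {..<n}"] by (simp add: factor sum.If_cases Int_def conj_commute)
  ultimately show ?thesis
    unfolding Delta_off_diag using \<open>C \<noteq> 0\<close> by simp
qed

lemma roots_eq_0_if_Delta_eq_0:
  assumes "esym n 1 z = 0" and "\<forall>l\<in>{2..n}. Delta n l z = 0" and "j < n"
  shows "z j = 0"
proof -
  let ?V = "z ` {..<n}"
  have "card ?V \<le> n" using card_image_le[of "{..<n}" z] by simp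
  then have "card ?V < 2"
    using Delta_card_image_neq_0[of n z] assms(2) by (metis atLeastAtMost_iff not_less)
  moreover have "?V \<noteq> {}" using assms(3) by auto
  ultimately have "card ?V = 1"
    by (simp add: card_gt_0_iff less_2_cases_iff)
  then obtain w where V: "?V = {w}"
    by (auto simp: card_Suc_eq)
  then have "z i = w" if "i < n" for i using that by auto
  then have "esym n 1 z = of_nat n * w"
    unfolding esym_1 by simp
  then have "of_nat n * w = 0"
    using assms(1) by simp
  then show ?thesis
    using V assms(3) by auto
qed

lemma coeffs_eq_0_if_tDelta_eq_0:
  assumes "a 1 = 0" and "\<forall>l\<in>{2..n}. tDelta n l a = 0" and "i \<in> {1..n}"
  shows "a i = 0"
proof -
  obtain z where z: "\<forall>i\<in>{1..n}. esym n i z = a i" using esym_surj by blast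
  have "esym n 1 z = 0"
  proof (cases "n = 0")
    case True
    then show ?thesis unfolding esym_1 by simp
  qed (use z assms(1) in auto)
  moreover have "\<forall>l\<in>{2..n}. Delta n l z = 0"
    using assms(2) tDelta_eq_Delta[OF z] by simp
  ultimately have z0: "z j = 0" if "j < n" for j
    using roots_eq_0_if_Delta_eq_0 that by blast
  have "(\<Prod>j\<in>S. z j) = 0" if "S \<subseteq> {..<n}" "card S = i" for S
  proof -
    have "S \<noteq> {}" "finite S" using that assms(3) by (auto intro: finite_subset)
    then show ?thesis using that z0 by (auto intro: prod_zero)
  qed
  then have "esym n i z = 0" unfolding esym_def by simp
  then show ?thesis using z assms(3) by simp
qed

lemma norm_root_le:
  assumes z: "\<forall>i\<in>{1..n}. esym n i z = a i" and j: "j < n"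
  shows "norm (z j) \<le> 1 + (\<Sum>i\<in>{1..n}. norm (a i))"
proof -
  let ?x = "z j"
  let ?c = "coeff (root_poly n z)"
  define A where "A = (\<Sum>i\<in>{1..n}. norm (a i))"
  have "A = (\<Sum>m<n. norm (a (n - m)))"
    unfolding A_def by (rule sum.reindex_bij_witness[of _ "\<lambda>m. n - m" "\<lambda>i. n - i"]) auto
  also have "\<dots> = (\<Sum>m<n. norm (?c m))"
    using z by (intro sum.cong refl) (simp add: coeff_root_poly norm_mult norm_power)
  finally have A: "A = (\<Sum>m<n. norm (?c m))" .
  show ?thesis
  proof (cases "norm ?x \<le> 1")
    case False
    have "poly (root_poly n z) ?x = 0"
      unfolding root_poly_def poly_prod using j by (intro prod_zero) auto
    then have "?x ^ n = - (\<Sum>m<n. ?c m * ?x ^ m)"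
      by (simp add: poly_altdef degree_root_poly atMost_Suc lessThan_Suc_atMost[symmetric]
          coeff_root_poly eq_neg_iff_add_eq_0 add.commute)
    then have "norm ?x ^ n = norm (\<Sum>m<n. ?c m * ?x ^ m)"
      by (metis norm_minus_cancel norm_power)
    also have "\<dots> \<le> (\<Sum>m<n. norm (?c m) * norm ?x ^ m)"
      by (rule order_trans[OF norm_sum]) (simp add: norm_mult norm_power)
    also have "\<dots> \<le> (\<Sum>m<n. norm (?c m) * norm ?x ^ (n - 1))"
      using False by (intro sum_mono mult_left_mono power_increasing) auto
    also have "\<dots> = A * norm ?x ^ (n - 1)"
      unfolding A by (simp add: sum_distrib_right)
    finally have "norm ?x * norm ?x ^ (n - 1) \<le> A * norm ?x ^ (n - 1)"
      using j by (metis Suc_pred' gr_implies_not0 neq0_conv power_Suc)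
    moreover have "0 < norm ?x ^ (n - 1)"
      using False by (intro zero_less_power) linarith
    ultimately have "norm ?x \<le> A"
      by (simp add: mult_le_cancel_right)
    then show ?thesis unfolding A_def by simp
  qed (use sum_nonneg[of "{1..n}" "\<lambda>i. norm (a i)"] in simp)
qed

text \<open>\<open>tDelta\<close> is \<open>Delta\<close> of an arbitrary root vector, so its continuity comes from compactness:
  root vectors are bounded by the coefficients, and a convergent subsequence of them converges
  to a root vector of the limit coefficients.\<close>
lemma tendsto_tDelta:
  assumes A: "\<forall>i\<in>{1..n}. (\<lambda>m. A m i) \<longlonglongrightarrow> a i"
  shows "(\<lambda>m. tDelta n k (A m)) \<longlonglongrightarrow> tDelta n k a"
proof (rule LIMSEQ_if_subseqs_LIMSEQ)
  fix r :: "nat \<Rightarrow> nat" assume r: "strict_mono r"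
  define Z where "Z m = (SOME z. \<forall>i\<in>{1..n}. esym n i z = A m i)" for m
  have Z: "\<forall>i\<in>{1..n}. esym n i (Z m) = A m i" for m
    unfolding Z_def using esym_surj by (rule someI_ex)
  have "(\<lambda>m. \<Sum>i\<in>{1..n}. norm (A m i)) \<longlonglongrightarrow> (\<Sum>i\<in>{1..n}. norm (a i))"
    using A by (intro tendsto_sum tendsto_norm) auto
  then have "Bseq (\<lambda>m. \<Sum>i\<in>{1..n}. norm (A m i))"
    by (intro convergent_imp_Bseq convergentI)
  then obtain B where B: "\<And>m. norm (\<Sum>i\<in>{1..n}. norm (A m i)) \<le> B"
    unfolding Bseq_def by blast
  have "norm (Z (r m) j) \<le> 1 + B" if "j < n" for m j
    using norm_root_le[OF Z[of "r m"] that] B[of "r m"] by (simp add: abs_le_iff)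
  then obtain s w where s: "strict_mono s" "\<forall>j<n. (\<lambda>m. Z (r (s m)) j) \<longlonglongrightarrow> w j"
    using bounded_vectors_convergent_subseq[of n "\<lambda>m. Z (r m)"] by blast
  have "esym n i w = a i" if "i \<in> {1..n}" for i
  proof (rule LIMSEQ_unique)
    show "(\<lambda>m. esym n i (Z (r (s m)))) \<longlonglongrightarrow> esym n i w"
      unfolding esym_def using s(2) by (intro tendsto_intros) auto
    have "((\<lambda>m. A m i) \<circ> (r \<circ> s)) \<longlonglongrightarrow> a i"
      using A that r s(1) by (intro LIMSEQ_subseq_LIMSEQ strict_mono_o) auto
    then show "(\<lambda>m. esym n i (Z (r (s m)))) \<longlonglongrightarrow> a i"
      using Z that by (simp add: o_def)
  qed
  then have "tDelta n k a = Delta n k w" by (intro tDelta_eq_Delta) auto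
  moreover have "(\<lambda>m. Delta n k (Z (r (s m)))) \<longlonglongrightarrow> Delta n k w"
    unfolding Delta_def using s(2) by (intro tendsto_intros) auto
  moreover have "tDelta n k (A (r (s m))) = Delta n k (Z (r (s m)))" for m
    using Z by (rule tDelta_eq_Delta)
  ultimately show "\<exists>s. strict_mono s \<and> (\<lambda>m. tDelta n k (A (r (s m)))) \<longlonglongrightarrow> tDelta n k a"
    using s(1) by auto
qed

lemma continuous_on_tDelta:
  fixes b :: "nat \<Rightarrow> 'a::metric_space \<Rightarrow> complex"
  assumes "\<forall>i\<in>{1..n}. continuous_on S (b i)"
  shows "continuous_on S (\<lambda>t. tDelta n k (\<lambda>i. b i t))"
proof (rule continuous_on_sequentiallyI)
  fix u a assume u: "\<forall>m. u m \<in> S" "a \<in> S" "u \<longlonglongrightarrow> a"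
  have "(\<lambda>m. b i (u m)) \<longlonglongrightarrow> b i a" if "i \<in> {1..n}" for i
    using assms that by (intro continuous_on_tendsto_compose[OF _ u(3) u(2)]) (simp_all add: u(1))
  then show "(\<lambda>m. tDelta n k (\<lambda>i. b i (u m))) \<longlonglongrightarrow> tDelta n k (\<lambda>i. b i a)"
    by (intro tendsto_tDelta) auto
qed

section \<open>Multiplicities along a parameter embedded into the complex numbers\<close>

text \<open>The parameter field (\<open>real\<close> or \<open>complex\<close>) with its embedding \<open>\<phi>\<close> into \<open>complex\<close>;
  the factor \<open>t ^ p\<close> in the multiplicity of a curve is read as \<open>\<phi> t ^ p\<close>.\<close>
locale parameter_embedding =
  fixes \<phi> :: "'a::real_normed_field \<Rightarrow> complex"
  assumes \<phi>_mult: "\<phi> (x * y) = \<phi> x * \<phi> y"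
    and \<phi>_one: "\<phi> 1 = 1"
    and norm_\<phi>: "norm (\<phi> x) = norm x"
    and isCont_\<phi>: "isCont \<phi> x"
begin

lemma \<phi>_eq_0_iff [simp]: "\<phi> x = 0 \<longleftrightarrow> x = 0"
  by (metis norm_\<phi> norm_eq_zero)

lemma \<phi>_0 [simp]: "\<phi> 0 = 0"
  by simp

lemma \<phi>_power: "\<phi> (x ^ q) = \<phi> x ^ q"
  by (induction q) (simp_all add: \<phi>_one \<phi>_mult)

lemma continuous_on_\<phi> [continuous_intros]: "continuous_on S f \<Longrightarrow> continuous_on S (\<lambda>x. \<phi> (f x))"
  using continuous_on_compose2[of UNIV \<phi> S f] isCont_\<phi>
  by (simp add: continuous_at_imp_continuous_on)

lemma tendsto_\<phi>_at_0: "(\<phi> \<longlongrightarrow> 0) (at 0)"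
  using isCont_\<phi>[of 0] by (simp add: isCont_def)

lemma eventually_\<phi>_neq_0: "eventually (\<lambda>t. \<phi> t \<noteq> 0) (at 0)"
  by (simp add: eventually_at_filter)

definition pow_factor_on :: "real \<Rightarrow> ('a \<Rightarrow> complex) \<Rightarrow> nat \<Rightarrow> ('a \<Rightarrow> complex) \<Rightarrow> bool" where
  "pow_factor_on e f p g \<longleftrightarrow> continuous_on (ball 0 e) g \<and> (\<forall>t\<in>ball 0 e. f t = \<phi> t ^ p * g t)"

definition mult_ge :: "('a \<Rightarrow> complex) \<Rightarrow> nat \<Rightarrow> bool" where
  "mult_ge f p \<longleftrightarrow> (\<exists>e>0. \<exists>g. pow_factor_on e f p g)"

text \<open>The only consequence of smoothness, real analyticity or holomorphy that the proof uses.\<close>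
definition has_taylor_expansions :: "('a \<Rightarrow> complex) \<Rightarrow> bool" where
  "has_taylor_expansions f \<longleftrightarrow> (\<forall>N. \<exists>c. mult_ge (\<lambda>t. f t - (\<Sum>j<N. c j * \<phi> t ^ j)) N)"

lemma mult_ge_0_if_has_taylor_expansions: "has_taylor_expansions f \<Longrightarrow> mult_ge f 0"
  unfolding has_taylor_expansions_def by (drule spec[of _ 0]) simp

lemma pow_factor_on_subset: "pow_factor_on e f p g \<Longrightarrow> e' \<le> e \<Longrightarrow> pow_factor_on e' f p g"
  unfolding pow_factor_on_def by (auto intro: continuous_on_subset)

lemma pow_factor_on_le:
  "pow_factor_on e f p g \<Longrightarrow> m \<le> p \<Longrightarrow> pow_factor_on e f m (\<lambda>t. \<phi> t ^ (p - m) * g t)"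
  unfolding pow_factor_on_def
  by (auto intro!: continuous_intros simp: mult.assoc simp flip: power_add)

lemma pow_factor_on_compose_power:
  assumes "pow_factor_on e f p g" "e \<le> 1" "0 < q"
  shows "pow_factor_on e (\<lambda>s. f (s ^ q)) (q * p) (\<lambda>s. g (s ^ q))"
proof -
  have "s ^ q \<in> ball 0 e" if "s \<in> ball 0 e" for s :: 'a
    using power_in_ball[OF that assms(2,3)] .
  then show ?thesis
    using assms(1) unfolding pow_factor_on_def
    by (auto intro!: continuous_on_compose2[of "ball 0 e" g] continuous_intros
        simp: \<phi>_power power_mult)
qed

lemma pow_factor_on_cancel:
  assumes "0 < e" "continuous_on (ball 0 e) f" "continuous_on (ball 0 e) g"
    and "\<forall>t\<in>ball 0 e. \<phi> t ^ m * f t = \<phi> t ^ (m + p) * g t"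
  shows "pow_factor_on e f p g"
proof -
  have off_0: "f t = \<phi> t ^ p * g t" if "t \<in> ball 0 e" "t \<noteq> 0" for t
  proof -
    have "\<phi> t ^ m * f t = \<phi> t ^ m * (\<phi> t ^ p * g t)"
      using assms(4) that(1) by (simp add: power_add mult.assoc)
    then show ?thesis using that(2) by simp
  qed
  have "f 0 = \<phi> 0 ^ p * g 0"
  proof (rule continuous_on_ball_eq_at_center[OF assms(1,2)])
    show "continuous_on (ball 0 e) (\<lambda>t. \<phi> t ^ p * g t)"
      using assms(3) by (intro continuous_intros continuous_on_id)
  qed (use off_0 in blast)
  then have "\<forall>t\<in>ball 0 e. f t = \<phi> t ^ p * g t"
    using off_0 by metis
  then show ?thesis
    using assms(3) unfolding pow_factor_on_def by blast
qed

lemma mult_ge_common_radius: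
  assumes "finite K" "\<forall>k\<in>K. mult_ge (f k) (p k)" "0 < e0"
  obtains d g where "0 < d" "d \<le> e0" "\<forall>k\<in>K. pow_factor_on d (f k) (p k) (g k)"
proof -
  have "\<forall>k\<in>K. eventually (\<lambda>d. \<exists>g. pow_factor_on d (f k) (p k) g) (at_right 0)"
  proof
    fix k assume "k \<in> K"
    then obtain e g where "0 < e" and g: "pow_factor_on e (f k) (p k) g"
      using assms(2) unfolding mult_ge_def by blast
    have "\<exists>g. pow_factor_on d (f k) (p k) g" if "d \<in> {0<..<e}" for d
      using pow_factor_on_subset[OF g, of d] that by auto
    then show "eventually (\<lambda>d. \<exists>g. pow_factor_on d (f k) (p k) g) (at_right 0)"
      using \<open>0 < e\<close> by (rule eventually_at_rightI)
  qed
  then have "eventually (\<lambda>d. 0 < d \<and> d \<le> e0 \<and> (\<forall>k\<in>K. \<exists>g. pow_factor_on d (f k) (p k) g)) (at_right 0)"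
    using assms(1,3) eventually_at_right_less[of 0]
      eventually_at_rightI[of 0 e0 "\<lambda>d. d \<le> e0"] eventually_ball_finite
    by (auto intro!: eventually_conj)
  then obtain d where "0 < d" "d \<le> e0" "\<forall>k\<in>K. \<exists>g. pow_factor_on d (f k) (p k) g"
    using eventually_happens'[OF trivial_limit_at_right_real] by blast
  then show thesis
    using that by metis
qed

lemma mult_ge_Suc_if_factor_vanishes:
  assumes f: "has_taylor_expansions f" and "0 < e" "pow_factor_on e f p g" "g 0 = 0"
  shows "mult_ge f (Suc p)"
proof -
  obtain c e1 G where "0 < e1" and G: "pow_factor_on e1 (\<lambda>t. f t - (\<Sum>j<Suc p. c j * \<phi> t ^ j)) (Suc p) G"
    using f unfolding has_taylor_expansions_def mult_ge_def by blast
  have "isCont g 0" "isCont G 0"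
    using assms(2,3) \<open>0 < e1\<close> G unfolding pow_factor_on_def
    by (metis centre_in_ball continuous_on_eq_continuous_at open_ball)+
  then have "((\<lambda>t. g t - \<phi> t * G t) \<longlongrightarrow> g 0 - \<phi> 0 * G 0) (at 0)"
    using isCont_\<phi>[of 0] by (intro tendsto_intros) (auto simp: isCont_def)
  moreover have "eventually (\<lambda>t. g t - \<phi> t * G t = (\<Sum>j\<le>p. c j * \<phi> t ^ j) / \<phi> t ^ p) (at 0)"
  proof (rule eventually_mono)
    show "eventually (\<lambda>t. t \<in> ball 0 (min e e1) - {0}) (at 0)"
      using assms(2) \<open>0 < e1\<close> by (intro eventually_at_in_open) auto
  next
    fix t :: 'a assume t: "t \<in> ball 0 (min e e1) - {0}"
    then have "f t = \<phi> t ^ p * g t"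
      using assms(3) unfolding pow_factor_on_def by simp
    moreover have "f t - (\<Sum>j\<le>p. c j * \<phi> t ^ j) = \<phi> t ^ Suc p * G t"
      using G t unfolding pow_factor_on_def lessThan_Suc_atMost by simp
    ultimately show "g t - \<phi> t * G t = (\<Sum>j\<le>p. c j * \<phi> t ^ j) / \<phi> t ^ p"
      using t by (simp add: field_simps)
  qed
  ultimately have "((\<lambda>t. (\<Sum>j\<le>p. c j * \<phi> t ^ j) / \<phi> t ^ p) \<longlongrightarrow> 0) (at 0)"
    using assms(4) Lim_transform_eventually by fastforce
  then have "c j = 0" if "j \<le> p" for j
    using power_sum_coeffs_eq_0[OF at_neq_bot tendsto_\<phi>_at_0 eventually_\<phi>_neq_0] that by blast
  then have "pow_factor_on e1 f (Suc p) G"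
    using G unfolding pow_factor_on_def lessThan_Suc_atMost by simp
  then show ?thesis
    using \<open>0 < e1\<close> unfolding mult_ge_def by blast
qed

lemma mult_ge_if_tendsto_quotient:
  assumes "0 < e" "continuous_on (ball 0 e) h" and lim: "((\<lambda>t. h t / \<phi> t ^ N) \<longlongrightarrow> L) (at 0)"
  shows "mult_ge h N"
proof -
  define G where "G t = (if t = 0 then L else h t / \<phi> t ^ N)" for t
  have cont_h: "isCont h t" if "t \<in> ball 0 e" for t
    using assms(2) that continuous_on_eq_continuous_at[OF open_ball] by blast
  have "isCont G t" if "t \<in> ball 0 e" for t
  proof (cases "t = 0")
    case True
    have "eventually (\<lambda>s. h s / \<phi> s ^ N = G s) (at 0)"
      by (simp add: G_def eventually_at_filter)
    then show ?thesis
      using True lim Lim_transform_eventually by (fastforce simp: isCont_def G_def)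
  next
    case False
    have "eventually (\<lambda>s. h s / \<phi> s ^ N = G s) (nhds t)"
      using t1_space_nhds[OF False] by eventually_elim (simp add: G_def)
    moreover have "isCont (\<lambda>s. h s / \<phi> s ^ N) t"
      using False cont_h[OF that] isCont_\<phi>[of t] by (auto intro!: continuous_intros)
    ultimately show ?thesis
      by (simp add: isCont_cong)
  qed
  then have "continuous_on (ball 0 e) G"
    by (simp add: continuous_at_imp_continuous_on)
  moreover have "h t = \<phi> t ^ N * G t" if "t \<in> ball 0 e" for t
  proof (cases "t = 0")
    case True
    have "((\<lambda>s. \<phi> s ^ N * (h s / \<phi> s ^ N)) \<longlongrightarrow> \<phi> 0 ^ N * L) (at 0)"
      using isCont_\<phi>[of 0] by (intro tendsto_intros lim) (simp add: isCont_def)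
    moreover have "eventually (\<lambda>s. \<phi> s ^ N * (h s / \<phi> s ^ N) = h s) (at 0)"
      by (simp add: eventually_at_filter)
    ultimately have "(h \<longlongrightarrow> \<phi> 0 ^ N * L) (at 0)"
      using Lim_transform_eventually by fastforce
    moreover have "(h \<longlongrightarrow> h 0) (at 0)"
      using cont_h[OF that] True by (simp add: isCont_def)
    ultimately show ?thesis
      using True tendsto_unique[OF at_neq_bot] by (fastforce simp: G_def)
  qed (simp add: G_def)
  ultimately show ?thesis
    using assms(1) unfolding mult_ge_def pow_factor_on_def by blast
qed

lemma has_taylor_expansions_if_sums:
  assumes "0 < r" and sums: "\<forall>t\<in>ball 0 r. (\<lambda>j. c j * \<phi> t ^ j) sums f t"
  shows "has_taylor_expansions f"
  unfolding has_taylor_expansions_def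
proof
  fix N
  define G where "G t = (\<Sum>j. c (j + N) * \<phi> t ^ j)" for t
  have "ereal r \<le> conv_radius c"
  proof (rule conv_radius_geI_ex)
    fix \<rho> :: real assume "0 < \<rho>" "ereal \<rho> < ereal r"
    then have "summable (\<lambda>j. c j * \<phi> (of_real \<rho>) ^ j)"
      using sums by (auto intro: sums_summable)
    then show "\<exists>z. norm z = \<rho> \<and> summable (\<lambda>j. c j * z ^ j)"
      using \<open>0 < \<rho>\<close> by (intro exI[of _ "\<phi> (of_real \<rho>)"]) (simp add: norm_\<phi>)
  qed
  moreover have "ereal (norm (\<phi> t)) < ereal r" if "t \<in> ball 0 r" for t
    using that by (simp add: norm_\<phi>)
  ultimately have in_radius: "ereal (norm (\<phi> t)) < conv_radius (\<lambda>j. c (j + N))" if "t \<in> ball 0 r" for t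
    using that by (metis conv_radius_shift order.strict_trans2)
  have "isCont G t" if "t \<in> ball 0 r" for t
    using isCont_o2[OF isCont_\<phi> DERIV_isCont[OF has_field_derivative_powser[OF in_radius[OF that]]]]
    by (simp add: G_def [abs_def] o_def)
  then have "continuous_on (ball 0 r) G"
    by (simp add: continuous_at_imp_continuous_on)
  moreover have "f t - (\<Sum>j<N. c j * \<phi> t ^ j) = \<phi> t ^ N * G t" if "t \<in> ball 0 r" for t
  proof -
    have "(\<lambda>j. c (j + N) * \<phi> t ^ j) sums G t"
      unfolding G_def using summable_in_conv_radius[OF in_radius[OF that]] by (rule summable_sums)
    then have "(\<lambda>j. \<phi> t ^ N * (c (j + N) * \<phi> t ^ j)) sums (\<phi> t ^ N * G t)"
      by (rule sums_mult)
    then have "(\<lambda>j. c (j + N) * \<phi> t ^ (j + N)) sums (\<phi> t ^ N * G t)"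
      by (simp add: power_add algebra_simps)
    then have "(\<lambda>j. c j * \<phi> t ^ j) sums (\<phi> t ^ N * G t + (\<Sum>j<N. c j * \<phi> t ^ j))"
      by (subst (asm) sums_iff_shift)
    then show ?thesis
      using sums that sums_unique2 by fastforce
  qed
  ultimately show "\<exists>c'. mult_ge (\<lambda>t. f t - (\<Sum>j<N. c' j * \<phi> t ^ j)) N"
    using assms(1) unfolding mult_ge_def pow_factor_on_def by blast
qed

lemma pow_factor_on_tDelta:
  assumes "\<forall>i\<in>{1..n}. pow_factor_on d (b i) (i * p) (c i)"
  shows "pow_factor_on d (\<lambda>t. tDelta n l (\<lambda>i. b i t)) (l * (l - 1) * p) (\<lambda>t. tDelta n l (\<lambda>i. c i t))"
  unfolding pow_factor_on_def
proof
  show "continuous_on (ball 0 d) (\<lambda>t. tDelta n l (\<lambda>i. c i t))"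
    using assms unfolding pow_factor_on_def by (intro continuous_on_tDelta) blast
  show "\<forall>t\<in>ball 0 d. tDelta n l (\<lambda>i. b i t) = \<phi> t ^ (l * (l - 1) * p) * tDelta n l (\<lambda>i. c i t)"
  proof
    fix t :: 'a assume "t \<in> ball 0 d"
    then have "tDelta n l (\<lambda>i. b i t) = tDelta n l (\<lambda>i. (\<phi> t ^ p) ^ i * c i t)"
      using assms unfolding pow_factor_on_def by (intro tDelta_cong) (simp add: mult.commute flip: power_mult)
    also have "\<dots> = (\<phi> t ^ p) ^ (l * (l - 1)) * tDelta n l (\<lambda>i. c i t)"
      by (rule tDelta_mult)
    finally show "tDelta n l (\<lambda>i. b i t) = \<phi> t ^ (l * (l - 1) * p) * tDelta n l (\<lambda>i. c i t)"
      by (simp add: power_mult mult.commute)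
  qed
qed

lemma tDelta_eq_0_at_0:
  assumes "0 < d" "p < r" "2 \<le> l"
    and b: "\<forall>i\<in>{1..n}. pow_factor_on d (b i) (i * p) (c i)"
    and h: "pow_factor_on d (\<lambda>t. tDelta n l (\<lambda>i. b i t)) (l * (l - 1) * r) h"
  shows "tDelta n l (\<lambda>i. c i 0) = 0"
proof -
  define E where "E = l * (l - 1)"
  have "pow_factor_on d (\<lambda>t. tDelta n l (\<lambda>i. c i t)) (E * (r - p)) h"
  proof (rule pow_factor_on_cancel[OF assms(1)])
    show "continuous_on (ball 0 d) (\<lambda>t. tDelta n l (\<lambda>i. c i t))" "continuous_on (ball 0 d) h"
      using pow_factor_on_tDelta[OF b] h unfolding pow_factor_on_def by blast+
    have "E * r = E * p + E * (r - p)"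
      using assms(2) by (simp add: algebra_simps)
    then show "\<forall>t\<in>ball 0 d. \<phi> t ^ (E * p) * tDelta n l (\<lambda>i. c i t) = \<phi> t ^ (E * p + E * (r - p)) * h t"
      using pow_factor_on_tDelta[OF b] h unfolding pow_factor_on_def E_def by (metis mult.commute)
  qed
  moreover have "0 < E * (r - p)"
    using assms(2,3) by (simp add: E_def)
  ultimately show ?thesis
    using assms(1) unfolding pow_factor_on_def by simp
qed

lemma mult_ge_tDelta_if_mult_ge_coeffs:
  assumes "0 < e" and a1: "\<forall>t\<in>ball 0 e. a 1 t = 0"
    and "\<forall>k\<in>{2..n}. mult_ge (a k) (k * r)"
  shows "\<forall>l\<in>{2..n}. mult_ge (\<lambda>t. tDelta n l (\<lambda>i. a i t)) (l * (l - 1) * r)"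
proof -
  obtain d g where "0 < d" "d \<le> e" and g: "\<forall>k\<in>{2..n}. pow_factor_on d (a k) (k * r) (g k)"
    using mult_ge_common_radius[OF finite_atLeastAtMost assms(3,1)] by blast
  define b where "b i = (if i = 1 then (\<lambda>_. 0) else g i)" for i
  have "\<forall>i\<in>{1..n}. pow_factor_on d (a i) (i * r) (b i)"
    using a1 \<open>d \<le> e\<close> g by (auto simp: b_def pow_factor_on_def)
  then show ?thesis
    using pow_factor_on_tDelta \<open>0 < d\<close> unfolding mult_ge_def by blast
qed

text \<open>Substituting \<open>t = s ^ q\<close> turns \<open>a k\<close> into \<open>\<phi> s ^ (k * p) * c k s\<close> with continuous \<open>c k\<close>.
  By homogeneity and \<open>p < q * r\<close> every \<open>tDelta n l\<close> of \<open>c _ 0\<close> vanishes, hence so does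
  \<open>c q 0 = G q 0\<close>.\<close>
lemma rescaled_coeff_eq_0:
  assumes "0 < d" "d \<le> 1" "q \<in> {2..n}" "m q = p" "p < q * r"
    and a1: "\<forall>t\<in>ball 0 d. a 1 t = 0"
    and G: "\<forall>k\<in>{2..n}. pow_factor_on d (a k) (m k) (G k)"
    and ratio: "\<forall>k\<in>{2..n}. k * p \<le> q * m k"
    and H: "\<forall>l\<in>{2..n}. pow_factor_on d (\<lambda>t. tDelta n l (\<lambda>i. a i t)) (l * (l - 1) * r) (H l)"
  shows "G q 0 = 0"
proof -
  have "0 < q" using assms(3) by simp
  define c where "c i = (if i = 1 then (\<lambda>_. 0) else (\<lambda>s. \<phi> s ^ (q * m i - i * p) * G i (s ^ q)))" for i
  have rescaled: "\<forall>i\<in>{1..n}. pow_factor_on d (\<lambda>s. a i (s ^ q)) (i * p) (c i)"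
  proof
    fix i assume i: "i \<in> {1..n}"
    show "pow_factor_on d (\<lambda>s. a i (s ^ q)) (i * p) (c i)"
    proof (cases "i = 1")
      case True
      have "a 1 (s ^ q) = 0" if "s \<in> ball 0 d" for s :: 'a
        using a1 power_in_ball[OF that assms(2) \<open>0 < q\<close>] by blast
      then show ?thesis
        using True by (simp add: c_def pow_factor_on_def)
    next
      case False
      with i have "i \<in> {2..n}" by simp
      with G ratio assms(2) \<open>0 < q\<close> show ?thesis
        using pow_factor_on_le[OF pow_factor_on_compose_power] False by (simp add: c_def)
    qed
  qed
  have "tDelta n l (\<lambda>i. c i 0) = 0" if "l \<in> {2..n}" for l
  proof (rule tDelta_eq_0_at_0[OF assms(1,5) _ rescaled])
    show "2 \<le> l" using that by simp
    show "pow_factor_on d (\<lambda>s. tDelta n l (\<lambda>i. a i (s ^ q))) (l * (l - 1) * (q * r)) (\<lambda>s. H l (s ^ q))"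
      using pow_factor_on_compose_power[OF bspec[OF H that] assms(2) \<open>0 < q\<close>]
      by (simp add: ac_simps)
  qed
  moreover have "c 1 0 = 0"
    by (simp add: c_def)
  ultimately have "c q 0 = 0"
    using coeffs_eq_0_if_tDelta_eq_0[of "\<lambda>i. c i 0" n q] assms(3) by simp
  then show ?thesis
    using assms(3,4) by (simp add: c_def power_0_left)
qed

lemma vanishing_critical_factor:
  assumes "0 < e" and a1: "\<forall>t\<in>ball 0 e. a 1 t = 0"
    and "q \<in> {2..n}" "m q = p" "p < q * r"
    and mult: "\<forall>k\<in>{2..n}. mult_ge (a k) (m k)"
    and ratio: "\<forall>k\<in>{2..n}. k * p \<le> q * m k"
    and Delta: "\<forall>l\<in>{2..n}. mult_ge (\<lambda>t. tDelta n l (\<lambda>i. a i t)) (l * (l - 1) * r)"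
  obtains d g where "0 < d" "pow_factor_on d (a q) p g" "g 0 = 0"
proof -
  have "0 < min e 1"
    using assms(1) by simp
  with mult obtain d0 G where "0 < d0" "d0 \<le> min e 1"
    and G: "\<forall>k\<in>{2..n}. pow_factor_on d0 (a k) (m k) (G k)"
    by (rule mult_ge_common_radius[OF finite_atLeastAtMost])
  obtain d H where "0 < d" "d \<le> d0"
    and H: "\<forall>l\<in>{2..n}. pow_factor_on d (\<lambda>t. tDelta n l (\<lambda>i. a i t)) (l * (l - 1) * r) (H l)"
    using mult_ge_common_radius[OF finite_atLeastAtMost Delta \<open>0 < d0\<close>] by blast
  have "d \<le> 1" "\<forall>t\<in>ball 0 d. a 1 t = 0"
    using \<open>d \<le> d0\<close> \<open>d0 \<le> min e 1\<close> a1 by auto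
  moreover have G': "\<forall>k\<in>{2..n}. pow_factor_on d (a k) (m k) (G k)"
    using G \<open>d \<le> d0\<close> pow_factor_on_subset by blast
  ultimately have "G q 0 = 0"
    using rescaled_coeff_eq_0[where m = m and G = G, OF \<open>0 < d\<close> _ assms(3-5) _ _ ratio H] by blast
  then show thesis
    using that \<open>0 < d\<close> G' assms(3,4) by blast
qed

lemma mult_ge_coeffs_if_mult_ge_tDelta:
  assumes "0 < e" and a1: "\<forall>t\<in>ball 0 e. a 1 t = 0"
    and taylor: "\<forall>k\<in>{2..n}. has_taylor_expansions (a k)"
    and Delta: "\<forall>l\<in>{2..n}. mult_ge (\<lambda>t. tDelta n l (\<lambda>i. a i t)) (l * (l - 1) * r)"
  shows "\<forall>k\<in>{2..n}. mult_ge (a k) (k * r)"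
proof (rule ccontr)
  assume "\<not> ?thesis"
  then obtain k1 where k1: "k1 \<in> {2..n}" "\<not> mult_ge (a k1) (k1 * r)" by blast
  define m where "m k = (GREATEST j. j \<le> k * r \<and> mult_ge (a k) j)" for k
  have m: "m k \<le> k * r \<and> mult_ge (a k) (m k)" if "k \<in> {2..n}" for k
  proof -
    have "0 \<le> k * r \<and> mult_ge (a k) 0"
      using that taylor mult_ge_0_if_has_taylor_expansions by blast
    then show ?thesis
      unfolding m_def by (rule GreatestI_nat[where b = "k * r"]) blast
  qed
  have m_max: "j \<le> m k" if "k \<in> {2..n}" "j \<le> k * r" "mult_ge (a k) j" for k j
    unfolding m_def using that by (intro Greatest_le_nat[where b = "k * r"]) auto
  have "finite {2..n}" "{2..n} \<noteq> {}" "\<forall>k\<in>{2..n}. 0 < k"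
    using k1(1) by auto
  then obtain q where q: "q \<in> {2..n}" and ratio: "\<forall>k\<in>{2..n}. m q * k \<le> m k * q"
    by (rule ex_min_ratio[of _ "\<lambda>k. k" m])
  define p where "p = m q"
  have "m k1 < k1 * r"
    using m[OF k1(1)] k1(2) by (cases "m k1 = k1 * r") auto
  have "k1 * p \<le> q * m k1"
    using ratio k1(1) by (simp add: p_def mult.commute)
  also have "\<dots> < q * (k1 * r)"
    using \<open>m k1 < k1 * r\<close> q by simp
  finally have "p < q * r"
    by (simp add: ac_simps)
  have "\<forall>k\<in>{2..n}. mult_ge (a k) (m k)"
    using m by blast
  moreover have "\<forall>k\<in>{2..n}. k * p \<le> q * m k"
    using ratio by (simp add: p_def mult.commute)
  ultimately obtain d g where "0 < d" "pow_factor_on d (a q) p g" "g 0 = 0"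
    using vanishing_critical_factor[where m = m, OF assms(1) a1 q p_def[symmetric] \<open>p < q * r\<close> _ _ Delta]
    by blast
  then have "mult_ge (a q) (Suc p)"
    using mult_ge_Suc_if_factor_vanishes taylor q by blast
  moreover have "Suc p \<le> q * r"
    using \<open>p < q * r\<close> by simp
  ultimately show False
    using m_max[OF q] p_def by fastforce
qed

lemma mult_ge_coeffs_iff_mult_ge_tDelta:
  assumes "0 < e" "\<forall>t\<in>ball 0 e. a 1 t = 0" "\<forall>k\<in>{2..n}. has_taylor_expansions (a k)"
  shows "(\<forall>k\<in>{2..n}. mult_ge (a k) (k * r)) \<longleftrightarrow>
    (\<forall>l\<in>{2..n}. mult_ge (\<lambda>t. tDelta n l (\<lambda>i. a i t)) (l * (l - 1) * r))"
  using mult_ge_tDelta_if_mult_ge_coeffs[where a = a, OF assms(1,2)]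
    mult_ge_coeffs_if_mult_ge_tDelta[where a = a, OF assms]
  by blast

end

section \<open>Real and complex parameters\<close>

interpretation real_parameter: parameter_embedding complex_of_real
  by unfold_locales (auto intro: continuous_intros)

interpretation complex_parameter: parameter_embedding "\<lambda>z::complex. z"
  by unfold_locales auto

text \<open>For the identity embedding these simp rules degenerate to \<open>x = 0 \<longleftrightarrow> x = 0\<close> and \<open>0 = 0\<close>,
  which make the simplifier loop.\<close>
declare complex_parameter.\<phi>_eq_0_iff [simp del] complex_parameter.\<phi>_0 [simp del]

lemma smooth_has_taylor_expansions:
  assumes "0 < e" "smooth_on (ball 0 e) f"
  shows "real_parameter.has_taylor_expansions f"
  unfolding real_parameter.has_taylor_expansions_def
proof
  fix N
  obtain D where "D 0 = f" and D: "\<forall>k. \<forall>t\<in>ball 0 e. (D k has_vector_derivative D (Suc k) t) (at t)"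
    using assms(2) unfolding smooth_on_def by blast
  have "isCont f t" if "t \<in> ball 0 e" for t
  proof -
    have "(D 0 has_vector_derivative D (Suc 0) t) (at t)"
      using D that by blast
    then have "isCont (D 0) t"
      by (rule has_vector_derivative_continuous)
    then show ?thesis
      using \<open>D 0 = f\<close> by simp
  qed
  then have "continuous_on (ball 0 e) f"
    by (simp add: continuous_at_imp_continuous_on)
  then have "continuous_on (ball 0 e) (\<lambda>t. f t - (\<Sum>j<N. D j 0 / fact j * complex_of_real t ^ j))"
    by (intro continuous_on_diff continuous_on_sum continuous_on_mult_left continuous_on_power
        continuous_on_of_real continuous_on_id)
  moreover have "((\<lambda>t. (f t - (\<Sum>j<N. D j 0 / fact j * complex_of_real t ^ j)) / complex_of_real t ^ N)
      \<longlongrightarrow> D N 0 / fact N) (at 0)"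
    using smooth_remainder_tendsto[OF assms(1) D, of N] unfolding \<open>D 0 = f\<close> .
  ultimately have "real_parameter.mult_ge (\<lambda>t. f t - (\<Sum>j<N. D j 0 / fact j * complex_of_real t ^ j)) N"
    by (rule real_parameter.mult_ge_if_tendsto_quotient[OF assms(1)])
  then show "\<exists>c. real_parameter.mult_ge (\<lambda>t. f t - (\<Sum>j<N. c j * complex_of_real t ^ j)) N"
    by (rule exI[where x = "\<lambda>j. D j 0 / fact j"])
qed

lemma real_analytic_has_taylor_expansions:
  assumes "0 < e" "real_analytic_on (ball 0 e) f"
  shows "real_parameter.has_taylor_expansions f"
proof -
  have "0 \<in> ball 0 e"
    using assms(1) by simp
  then obtain r c where "0 < r" "\<forall>t\<in>ball 0 r. (\<lambda>j. c j * complex_of_real (t - 0) ^ j) sums f t"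
    using assms(2) unfolding real_analytic_on_def by blast
  then show ?thesis
    using real_parameter.has_taylor_expansions_if_sums by simp
qed

lemma holomorphic_has_taylor_expansions:
  assumes "0 < e" "f holomorphic_on ball 0 e"
  shows "complex_parameter.has_taylor_expansions f"
proof -
  have "\<forall>t\<in>ball 0 e. (\<lambda>j. (deriv ^^ j) f 0 / fact j * t ^ j) sums f t"
    using holomorphic_power_series[OF assms(2)] by simp
  then show ?thesis
    by (rule complex_parameter.has_taylor_expansions_if_sums[OF assms(1)])
qed

lemma mult_ge_real_eq: "mult_ge_real = real_parameter.mult_ge"
  unfolding mult_ge_real_def real_parameter.mult_ge_def real_parameter.pow_factor_on_def ..

lemma mult_ge_cplx_eq: "mult_ge_cplx = complex_parameter.mult_ge"
  unfolding mult_ge_cplx_def complex_parameter.mult_ge_def complex_parameter.pow_factor_on_def ..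

theorem lemma6p4:
  shows
  "(\<forall>(n::nat) (a :: nat \<Rightarrow> real \<Rightarrow> complex) (e::real) (r::nat).
      e > 0 \<longrightarrow> (\<forall>t\<in>ball 0 e. a 1 t = 0) \<longrightarrow>
      ((\<forall>k\<in>{2..n}. smooth_on (ball 0 e) (a k)) \<or>
       (\<forall>k\<in>{2..n}. real_analytic_on (ball 0 e) (a k))) \<longrightarrow>
      ((\<forall>k\<in>{2..n}. mult_ge_real (a k) (k * r)) \<longleftrightarrow>
       (\<forall>k\<in>{2..n}. mult_ge_real (\<lambda>t. tDelta n k (\<lambda>i. a i t)) (k * (k - 1) * r))))
   \<and>
   (\<forall>(n::nat) (a :: nat \<Rightarrow> complex \<Rightarrow> complex) (e::real) (r::nat).
      e > 0 \<longrightarrow> (\<forall>t\<in>ball 0 e. a 1 t = 0) \<longrightarrow>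
      (\<forall>k\<in>{2..n}. a k holomorphic_on ball 0 e) \<longrightarrow>
      ((\<forall>k\<in>{2..n}. mult_ge_cplx (a k) (k * r)) \<longleftrightarrow>
       (\<forall>k\<in>{2..n}. mult_ge_cplx (\<lambda>t. tDelta n k (\<lambda>i. a i t)) (k * (k - 1) * r))))"
proof (intro conjI allI impI)
  fix n r :: nat and a :: "nat \<Rightarrow> real \<Rightarrow> complex" and e :: real
  assume e: "0 < e" and a1: "\<forall>t\<in>ball 0 e. a 1 t = 0"
    and "(\<forall>k\<in>{2..n}. smooth_on (ball 0 e) (a k)) \<or> (\<forall>k\<in>{2..n}. real_analytic_on (ball 0 e) (a k))"
  then have "\<forall>k\<in>{2..n}. real_parameter.has_taylor_expansions (a k)"
    using smooth_has_taylor_expansions real_analytic_has_taylor_expansions by blast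
  with e a1 show "(\<forall>k\<in>{2..n}. mult_ge_real (a k) (k * r)) \<longleftrightarrow>
      (\<forall>k\<in>{2..n}. mult_ge_real (\<lambda>t. tDelta n k (\<lambda>i. a i t)) (k * (k - 1) * r))"
    unfolding mult_ge_real_eq by (rule real_parameter.mult_ge_coeffs_iff_mult_ge_tDelta)
next
  fix n r :: nat and a :: "nat \<Rightarrow> complex \<Rightarrow> complex" and e :: real
  assume e: "0 < e" and a1: "\<forall>t\<in>ball 0 e. a 1 t = 0"
    and "\<forall>k\<in>{2..n}. a k holomorphic_on ball 0 e"
  then have "\<forall>k\<in>{2..n}. complex_parameter.has_taylor_expansions (a k)"
    using holomorphic_has_taylor_expansions by blast
  with e a1 show "(\<forall>k\<in>{2..n}. mult_ge_cplx (a k) (k * r)) \<longleftrightarrow>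
      (\<forall>k\<in>{2..n}. mult_ge_cplx (\<lambda>t. tDelta n k (\<lambda>i. a i t)) (k * (k - 1) * r))"
    unfolding mult_ge_cplx_eq by (rule complex_parameter.mult_ge_coeffs_iff_mult_ge_tDelta)
qed

end
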